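(* Let $(\Gamma,\mathcal{G}_\Gamma)$ and $(\Sigma,\mathcal{G}_\Sigma)$ be labeled graphs whose vertex groups are all directly-indecomposable cyclic groups, and let $\phi:W(\Gamma)\to W(\Sigma)$ be a group isomorphism. Then the map $V_{\Gamma_A}\to W(\Sigma_A)$, $v\mapsto\rho_{\Sigma_A}(\phi(v))$, extends to a group isomorphism $W(\Gamma_A)\to W(\Sigma_A)$.
   Context: A labeled graph $(\Lambda,\mathcal{G}_\Lambda)$ consists of a nonempty finite simplicial graph $\Lambda$ with vertex set $V_\Lambda$ and a family $\mathcal{G}_\Lambda=\{G_v\}_{v\in V_\Lambda}$ of nontrivial groups. Its graph product $W(\Lambda)$ is the quotient of the free product $\ast_{v}G_v$ by the relations $gh=hg$ for $g\in G_v$, $h\in G_{v'}$ with $v,v'$ adjacent. For a full subgraph $\Theta$, $W(\Theta)$ denotes the subgroup generated by the images of $G_v$, $v\in V_\Theta$ (isomorphic to the graph product of the labeled subgraph). A cyclic group is directly-indecomposable if it is infinite or has prime-power order. For cyclic vertex groups, a generator of each $G_v$ is fixed and also denoted $v$. $\Lambda_T$ (resp. $\Lambda_A$) is the full subgraph of $\Lambda$ spanned by the vertices $v$ with $G_v$ finite (resp. infinite). $\rho_{\Sigma_A}:W(\Sigma)\to W(\Sigma_A)$ is the retraction homomorphism sending each $v\in V_{\Sigma_A}$ to $v$ and each $v\in V_{\Sigma_T}$ to $1$. *)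

theory Defs
  imports "HOL-Algebra.Group" "HOL-Computational_Algebra.Primes"
begin

text \<open>A labeled graph with directly-indecomposable cyclic vertex groups is encoded by a
vertex set V, a symmetric irreflexive adjacency relation E, and an order function
n: the vertex group of v is the cyclic group Z/(n v) (n v = 0 meaning Z), with
fixed generator the class of 1. Directly-indecomposable and nontrivial means
n v = 0 or n v = p^k with p prime and k >= 1.\<close>

type_synonym 'v gword = "('v \<times> int) list"

definition gp_words :: "'v set \<Rightarrow> 'v gword set" where
  "gp_words V = {w. set (map fst w) \<subseteq> V}"

definition dindec_cyclic_order :: "nat \<Rightarrow> bool" where
  "dindec_cyclic_order m \<longleftrightarrow> m = 0 \<or> (\<exists>p k. prime p \<and> k \<ge> 1 \<and> m = p ^ k)"

definition labeled_cyclic_graph :: "'v set \<Rightarrow> ('v \<Rightarrow> 'v \<Rightarrow> bool) \<Rightarrow> ('v \<Rightarrow> nat) \<Rightarrow> bool" where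
  "labeled_cyclic_graph V E n \<longleftrightarrow>
     finite V \<and> V \<noteq> {} \<and>
     (\<forall>v w. E v w \<longrightarrow> v \<in> V \<and> w \<in> V) \<and>
     (\<forall>v w. E v w \<longrightarrow> E w v) \<and> (\<forall>v. \<not> E v v) \<and>
     (\<forall>v\<in>V. dindec_cyclic_order (n v))"

text \<open>The congruence on words (letters (v,a) standing for the element a of Z/(n v))
defining the graph product.\<close>

inductive gp_rel :: "'v set \<Rightarrow> ('v \<Rightarrow> 'v \<Rightarrow> bool) \<Rightarrow> ('v \<Rightarrow> nat) \<Rightarrow> 'v gword \<Rightarrow> 'v gword \<Rightarrow> bool"
  for V E n where
  gp_refl: "w \<in> gp_words V \<Longrightarrow> gp_rel V E n w w"
| gp_sym: "gp_rel V E n x y \<Longrightarrow> gp_rel V E n y x"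
| gp_trans: "gp_rel V E n x y \<Longrightarrow> gp_rel V E n y z \<Longrightarrow> gp_rel V E n x z"
| gp_mult: "\<lbrakk>v \<in> V; p \<in> gp_words V; s \<in> gp_words V\<rbrakk> \<Longrightarrow>
      gp_rel V E n (p @ [(v,a),(v,b)] @ s) (p @ [(v,a+b)] @ s)"
| gp_zero: "\<lbrakk>v \<in> V; p \<in> gp_words V; s \<in> gp_words V; int (n v) dvd a\<rbrakk> \<Longrightarrow>
      gp_rel V E n (p @ [(v,a)] @ s) (p @ s)"
| gp_comm: "\<lbrakk>v \<in> V; w \<in> V; E v w; p \<in> gp_words V; s \<in> gp_words V\<rbrakk> \<Longrightarrow>
      gp_rel V E n (p @ [(v,a),(w,b)] @ s) (p @ [(w,b),(v,a)] @ s)"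

definition gp_class :: "'v set \<Rightarrow> ('v \<Rightarrow> 'v \<Rightarrow> bool) \<Rightarrow> ('v \<Rightarrow> nat) \<Rightarrow> 'v gword \<Rightarrow> 'v gword set" where
  "gp_class V E n w = {z. gp_rel V E n w z}"

definition graph_product :: "'v set \<Rightarrow> ('v \<Rightarrow> 'v \<Rightarrow> bool) \<Rightarrow> ('v \<Rightarrow> nat) \<Rightarrow> 'v gword set monoid" where
  "graph_product V E n =
     \<lparr> partial_object.carrier = gp_class V E n ` gp_words V,
       monoid.mult = (\<lambda>X Y. \<Union>x\<in>X. \<Union>y\<in>Y. gp_class V E n (x @ y)),
       monoid.one = gp_class V E n [] \<rparr>"

definition gp_gen :: "'v set \<Rightarrow> ('v \<Rightarrow> 'v \<Rightarrow> bool) \<Rightarrow> ('v \<Rightarrow> nat) \<Rightarrow> 'v \<Rightarrow> 'v gword set" where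
  "gp_gen V E n v = gp_class V E n [(v, 1)]"

text \<open>Vertices with infinite vertex group (the subgraph Lambda_A is the full subgraph on these).\<close>
definition inf_vertices :: "'v set \<Rightarrow> ('v \<Rightarrow> nat) \<Rightarrow> 'v set" where
  "inf_vertices V n = {v \<in> V. n v = 0}"

definition retr_A :: "'v set \<Rightarrow> ('v \<Rightarrow> 'v \<Rightarrow> bool) \<Rightarrow> ('v \<Rightarrow> nat) \<Rightarrow> 'v gword set \<Rightarrow> 'v gword set" where
  "retr_A V E n X = (\<Union>x\<in>X. gp_class (inf_vertices V n) E n (filter (\<lambda>l. n (fst l) = 0) x))"

end

theory Submission
  imports Defs
begin

(* The candidate inverse is  psi' = rho_A o phi^-1 o incl.  The only non-formal input is that
   right-angled Artin groups are torsion-free: then for a finite-order generator u of W(Sigma)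
   the element rho_A(phi^-1 u) is a torsion element, hence trivial, so  rho_A o phi^-1  factors
   through rho_A : W(Sigma) -> W(Sigma_A), and  psi' o psi = id  follows; symmetrically psi o psi' = id. *)

section \<open>Words and the graph product as a group\<close>

lemma gp_words_Nil[simp]: "[] \<in> gp_words V"
  by (simp add: gp_words_def)

lemma gp_words_Cons[simp]: "(l # w \<in> gp_words V) = (fst l \<in> V \<and> w \<in> gp_words V)"
  by (auto simp: gp_words_def)

lemma gp_words_append[simp]: "(x @ y \<in> gp_words V) = (x \<in> gp_words V \<and> y \<in> gp_words V)"
  by (auto simp: gp_words_def)

lemma gp_words_mono: "w \<in> gp_words V1 \<Longrightarrow> V1 \<subseteq> V2 \<Longrightarrow> w \<in> gp_words V2"
  by (auto simp: gp_words_def)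

lemma gp_rel_words: "gp_rel V E n x y \<Longrightarrow> x \<in> gp_words V \<and> y \<in> gp_words V"
  by (induction rule: gp_rel.induct) auto

lemma gp_rel_app:
  assumes "gp_rel V E n x y" "p \<in> gp_words V" "s \<in> gp_words V"
  shows "gp_rel V E n (p @ x @ s) (p @ y @ s)"
  using assms
proof (induction arbitrary: p s rule: gp_rel.induct)
  case (gp_refl w) then show ?case by (intro gp_rel.gp_refl) auto
next
  case (gp_sym x y) then show ?case by (blast intro: gp_rel.gp_sym)
next
  case (gp_trans x y z) then show ?case by (blast intro: gp_rel.gp_trans)
next
  case (gp_mult v p' s' a b)
  from gp_rel.gp_mult[of v V "p @ p'" "s' @ s" E n a b] gp_mult show ?case by simp
next
  case (gp_zero v p' s' a)
  from gp_rel.gp_zero[of v V "p @ p'" "s' @ s" n a E] gp_zero show ?case by simp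
next
  case (gp_comm v w p' s' a b)
  from gp_rel.gp_comm[of v V w E "p @ p'" "s' @ s" n a b] gp_comm show ?case by simp
qed

lemma gp_rel_app2:
  assumes "gp_rel V E n x x'" "gp_rel V E n y y'"
  shows "gp_rel V E n (x @ y) (x' @ y')"
proof -
  have w: "x \<in> gp_words V" "x' \<in> gp_words V" "y \<in> gp_words V" "y' \<in> gp_words V"
    using assms gp_rel_words by blast+
  have "gp_rel V E n ([] @ x @ y) ([] @ x' @ y)" by (rule gp_rel_app) (use assms w in auto)
  moreover have "gp_rel V E n (x' @ y @ []) (x' @ y' @ [])" by (rule gp_rel_app) (use assms w in auto)
  ultimately show ?thesis by (auto intro: gp_rel.gp_trans)
qed

lemma gp_class_eq: "gp_rel V E n x y \<Longrightarrow> gp_class V E n x = gp_class V E n y"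
  unfolding gp_class_def by (auto intro: gp_rel.gp_trans gp_rel.gp_sym)

lemma gp_class_self: "x \<in> gp_words V \<Longrightarrow> x \<in> gp_class V E n x"
  by (simp add: gp_class_def gp_rel.gp_refl)

lemma gp_carrier: "carrier (graph_product V E n) = gp_class V E n ` gp_words V"
  by (simp add: graph_product_def)

lemma gp_one: "one (graph_product V E n) = gp_class V E n []"
  by (simp add: graph_product_def)

lemma gp_mult_class:
  assumes "x \<in> gp_words V" "y \<in> gp_words V"
  shows "gp_class V E n x \<otimes>\<^bsub>graph_product V E n\<^esub> gp_class V E n y = gp_class V E n (x @ y)"
proof -
  have "(\<Union>a\<in>gp_class V E n x. \<Union>b\<in>gp_class V E n y. gp_class V E n (a @ b)) = gp_class V E n (x @ y)"
  proof (intro equalityI subsetI)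
    fix z assume "z \<in> (\<Union>a\<in>gp_class V E n x. \<Union>b\<in>gp_class V E n y. gp_class V E n (a @ b))"
    then obtain a b where ab: "gp_rel V E n x a" "gp_rel V E n y b" "z \<in> gp_class V E n (a @ b)"
      by (auto simp: gp_class_def)
    have "gp_class V E n (a @ b) = gp_class V E n (x @ y)"
      by (rule gp_class_eq, rule gp_rel.gp_sym, rule gp_rel_app2) (use ab in auto)
    with ab show "z \<in> gp_class V E n (x @ y)" by simp
  next
    fix z assume "z \<in> gp_class V E n (x @ y)"
    then show "z \<in> (\<Union>a\<in>gp_class V E n x. \<Union>b\<in>gp_class V E n y. gp_class V E n (a @ b))"
      using assms by (auto intro!: bexI gp_class_self)
  qed
  then show ?thesis by (simp add: graph_product_def)
qed

lemma gp_letter_closed[simp]: "u \<in> V \<Longrightarrow> gp_class V E n [(u, a)] \<in> carrier (graph_product V E n)"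
  by (auto simp: gp_carrier)

definition inv_word :: "'v gword \<Rightarrow> 'v gword" where
  "inv_word w = rev (map (\<lambda>(u,a). (u, -a)) w)"

lemma inv_word_words[simp]: "(inv_word w \<in> gp_words V) = (w \<in> gp_words V)"
  by (induction w) (auto simp: inv_word_def)

lemma inv_word_Cons: "inv_word (l # w) = inv_word w @ [(fst l, - snd l)]"
  by (cases l) (simp add: inv_word_def)

lemma gp_rel_letter_inv: "u \<in> V \<Longrightarrow> gp_rel V E n [(u, -a), (u, a)] []"
proof -
  assume u: "u \<in> V"
  have "gp_rel V E n ([] @ [(u, -a), (u, a)] @ []) ([] @ [(u, -a + a)] @ [])"
    by (rule gp_rel.gp_mult) (use u in auto)
  moreover have "gp_rel V E n ([] @ [(u, 0)] @ []) ([] @ [])"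
    by (rule gp_rel.gp_zero) (use u in auto)
  ultimately show ?thesis by (auto intro: gp_rel.gp_trans)
qed

lemma gp_rel_inv_word: "w \<in> gp_words V \<Longrightarrow> gp_rel V E n (inv_word w @ w) []"
proof (induction w)
  case Nil then show ?case by (simp add: inv_word_def gp_rel.gp_refl)
next
  case (Cons l w)
  obtain u a where l: "l = (u, a)" by (cases l)
  have uV: "u \<in> V" "w \<in> gp_words V" using Cons.prems l by auto
  have "inv_word (l # w) @ l # w = inv_word w @ [(u, -a), (u, a)] @ w" by (simp add: inv_word_Cons l)
  moreover have "gp_rel V E n (inv_word w @ [(u, -a), (u, a)] @ w) (inv_word w @ [] @ w)"
    by (rule gp_rel_app) (use gp_rel_letter_inv uV in auto)
  ultimately show ?case using Cons.IH uV by (auto intro: gp_rel.gp_trans)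
qed

lemma gp_group: "group (graph_product V E n)"
proof (rule groupI)
  let ?G = "graph_product V E n"
  show "one ?G \<in> carrier ?G" by (auto simp: gp_carrier gp_one)
  fix x y z assume xyz: "x \<in> carrier ?G" "y \<in> carrier ?G" "z \<in> carrier ?G"
  then obtain a b c where abc: "a \<in> gp_words V" "b \<in> gp_words V" "c \<in> gp_words V"
    "x = gp_class V E n a" "y = gp_class V E n b" "z = gp_class V E n c"
    by (auto simp: gp_carrier)
  show "x \<otimes>\<^bsub>?G\<^esub> y \<in> carrier ?G" using abc by (simp add: gp_mult_class gp_carrier)
  show "x \<otimes>\<^bsub>?G\<^esub> y \<otimes>\<^bsub>?G\<^esub> z = x \<otimes>\<^bsub>?G\<^esub> (y \<otimes>\<^bsub>?G\<^esub> z)" using abc by (simp add: gp_mult_class)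
  show "one ?G \<otimes>\<^bsub>?G\<^esub> x = x" using abc
    by (metis append_Nil gp_mult_class gp_one gp_words_Nil)
  show "\<exists>y\<in>carrier ?G. y \<otimes>\<^bsub>?G\<^esub> x = one ?G"
    using abc by (intro bexI[of _ "gp_class V E n (inv_word a)"])
      (simp_all add: gp_carrier gp_one gp_mult_class gp_class_eq gp_rel_inv_word)
qed

lemma gp_rel_mono: "gp_rel V1 E n x y \<Longrightarrow> V1 \<subseteq> V2 \<Longrightarrow> gp_rel V2 E n x y"
proof (induction rule: gp_rel.induct)
  case (gp_refl w) then show ?case by (intro gp_rel.gp_refl) (auto simp: gp_words_def)
next
  case (gp_sym x y) then show ?case by (blast intro: gp_rel.gp_sym)
next
  case (gp_trans x y z) then show ?case by (blast intro: gp_rel.gp_trans)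
next
  case (gp_mult v p s a b) then show ?case by (intro gp_rel.gp_mult) (auto simp: gp_words_def)
next
  case (gp_zero v p s a) then show ?case by (intro gp_rel.gp_zero) (auto simp: gp_words_def)
next
  case (gp_comm v w p s a b) then show ?case by (intro gp_rel.gp_comm) (auto simp: gp_words_def)
qed

lemma filter_words: "x \<in> gp_words V1 \<Longrightarrow> (\<forall>u\<in>V1. P u \<longrightarrow> u \<in> V2) \<Longrightarrow>
   filter (\<lambda>l. P (fst l)) x \<in> gp_words V2"
  by (auto simp: gp_words_def)

lemma gp_rel_filter: "gp_rel V1 E n x y \<Longrightarrow> (\<forall>u\<in>V1. P u \<longrightarrow> u \<in> V2) \<Longrightarrow>
   gp_rel V2 E n (filter (\<lambda>l. P (fst l)) x) (filter (\<lambda>l. P (fst l)) y)"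
proof (induction rule: gp_rel.induct)
  case (gp_refl w) then show ?case by (intro gp_rel.gp_refl filter_words)
next
  case (gp_sym x y) then show ?case by (blast intro: gp_rel.gp_sym)
next
  case (gp_trans x y z) then show ?case by (blast intro: gp_rel.gp_trans)
next
  case (gp_mult v p s a b) then show ?case
    using gp_rel.gp_mult[of v V2 "filter (\<lambda>l. P (fst l)) p" "filter (\<lambda>l. P (fst l)) s" E n a b]
    by (cases "P v") (auto intro!: gp_rel.gp_refl filter_words)
next
  case (gp_zero v p s a) then show ?case
    using gp_rel.gp_zero[of v V2 "filter (\<lambda>l. P (fst l)) p" "filter (\<lambda>l. P (fst l)) s" n a E]
    by (cases "P v") (auto intro!: gp_rel.gp_refl filter_words)
next
  case (gp_comm v w p s a b) then show ?case
    using gp_rel.gp_comm[of v V2 w E "filter (\<lambda>l. P (fst l)) p" "filter (\<lambda>l. P (fst l)) s" n a b]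
    by (cases "P v"; cases "P w") (auto intro!: gp_rel.gp_refl filter_words)
qed

section \<open>Homomorphisms between graph products\<close>

definition induced_map :: "'v set \<Rightarrow> ('v \<Rightarrow> 'v \<Rightarrow> bool) \<Rightarrow> ('v \<Rightarrow> nat) \<Rightarrow> ('v gword \<Rightarrow> 'v gword) \<Rightarrow>
    'v gword set \<Rightarrow> 'v gword set" where
  "induced_map V2 E n f X = (\<Union>x\<in>X. gp_class V2 E n (f x))"

lemma induced_map_class:
  assumes resp: "\<And>x y. gp_rel V1 E n x y \<Longrightarrow> gp_rel V2 E n (f x) (f y)"
    and x: "x \<in> gp_words V1"
  shows "induced_map V2 E n f (gp_class V1 E n x) = gp_class V2 E n (f x)"
proof (intro equalityI subsetI)
  fix z assume "z \<in> induced_map V2 E n f (gp_class V1 E n x)"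
  then obtain y where y: "gp_rel V1 E n x y" "z \<in> gp_class V2 E n (f y)"
    by (auto simp: induced_map_def gp_class_def)
  then show "z \<in> gp_class V2 E n (f x)" using gp_class_eq[OF resp[OF y(1)]] by simp
next
  fix z assume "z \<in> gp_class V2 E n (f x)"
  then show "z \<in> induced_map V2 E n f (gp_class V1 E n x)"
    unfolding induced_map_def using gp_class_self[OF x] by blast
qed

lemma induced_map_hom:
  assumes resp: "\<And>x y. gp_rel V1 E n x y \<Longrightarrow> gp_rel V2 E n (f x) (f y)"
    and app: "\<And>x y. f (x @ y) = f x @ f y"
  shows "induced_map V2 E n f \<in> hom (graph_product V1 E n) (graph_product V2 E n)"
proof -
  have fw: "f x \<in> gp_words V2" if "x \<in> gp_words V1" for x
    using gp_rel_words[OF resp[OF gp_rel.gp_refl[OF that]]] by simp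
  show ?thesis
    unfolding hom_def
    by (auto simp: gp_carrier induced_map_class[OF resp] gp_mult_class app fw)
qed

lemma class_letter_succ:
  assumes "u \<in> V"
  shows "gp_class V E n [(u, a + 1)] = gp_gen V E n u \<otimes>\<^bsub>graph_product V E n\<^esub> gp_class V E n [(u, a)]"
proof -
  have "gp_rel V E n ([] @ [(u, 1), (u, a)] @ []) ([] @ [(u, 1 + a)] @ [])"
    by (rule gp_rel.gp_mult) (use assms in auto)
  then show ?thesis using assms
    by (simp add: gp_gen_def gp_mult_class gp_class_eq add.commute)
qed

lemma class_letter_zero:
  assumes "u \<in> V" "int (n u) dvd a"
  shows "gp_class V E n [(u, a)] = one (graph_product V E n)"
proof -
  have "gp_rel V E n ([] @ [(u, a)] @ []) ([] @ [])"
    by (rule gp_rel.gp_zero) (use assms in auto)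
  then show ?thesis by (simp add: gp_one gp_class_eq)
qed

lemma class_letter_pow:
  assumes "u \<in> V"
  shows "gp_class V E n [(u, int k)] = gp_gen V E n u [^]\<^bsub>graph_product V E n\<^esub> k"
proof (induction k)
  case 0 then show ?case using class_letter_zero[OF assms] by simp
next
  case (Suc k)
  interpret group "graph_product V E n" by (rule gp_group)
  have g: "gp_gen V E n u \<in> carrier (graph_product V E n)"
    using assms by (simp add: gp_gen_def)
  have "gp_class V E n [(u, int (Suc k))] = gp_gen V E n u \<otimes>\<^bsub>graph_product V E n\<^esub> gp_class V E n [(u, int k)]"
    using class_letter_succ[OF assms, of E n "int k"] by (simp add: add.commute)
  then show ?case using Suc g by (metis nat_pow_Suc2)
qed

lemma gen_pow_order:
  assumes "u \<in> V"
  shows "gp_gen V E n u [^]\<^bsub>graph_product V E n\<^esub> (n u) = one (graph_product V E n)"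
  using class_letter_pow[OF assms, of E n "n u"] class_letter_zero[OF assms, of n "int (n u)" E] by simp

lemma hom_eq_on_letters:
  assumes h1: "h1 \<in> hom (graph_product V E n) H" and h2: "h2 \<in> hom (graph_product V E n) H"
    and H: "group H" and u: "u \<in> V" and gen: "h1 (gp_gen V E n u) = h2 (gp_gen V E n u)"
  shows "h1 (gp_class V E n [(u, a)]) = h2 (gp_class V E n [(u, a)])"
proof -
  let ?G = "graph_product V E n"
  interpret G: group ?G by (rule gp_group)
  interpret g1: group_hom ?G H h1 using h1 H by (simp add: group_hom_def group_hom_axioms_def G.is_group)
  interpret g2: group_hom ?G H h2 using h2 H by (simp add: group_hom_def group_hom_axioms_def G.is_group)
  have gc: "gp_gen V E n u \<in> carrier ?G" using u by (simp add: gp_gen_def)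
  show ?thesis
  proof (induction a rule: int_induct[where k = 0])
    case base
    then show ?case using class_letter_zero[OF u, of n 0 E] by simp
  next
    case (step1 i)
    then show ?case using class_letter_succ[OF u, of E n i] gc u gen by simp
  next
    case (step2 i)
    have "gp_class V E n [(u, i)] = gp_gen V E n u \<otimes>\<^bsub>?G\<^esub> gp_class V E n [(u, i - 1)]"
      using class_letter_succ[OF u, of E n "i - 1"] by simp
    then have "gp_class V E n [(u, i - 1)] = inv\<^bsub>?G\<^esub> gp_gen V E n u \<otimes>\<^bsub>?G\<^esub> gp_class V E n [(u, i)]"
      using gc u by (simp add: G.inv_solve_left)
    then show ?case using step2 gc u gen by simp
  qed
qed

lemma hom_eq_on_generators:
  assumes h1: "h1 \<in> hom (graph_product V E n) H" and h2: "h2 \<in> hom (graph_product V E n) H"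
    and H: "group H"
    and gens: "\<And>u. u \<in> V \<Longrightarrow> h1 (gp_gen V E n u) = h2 (gp_gen V E n u)"
    and x: "x \<in> carrier (graph_product V E n)"
  shows "h1 x = h2 x"
proof -
  let ?G = "graph_product V E n"
  obtain w where w: "w \<in> gp_words V" "x = gp_class V E n w" using x by (auto simp: gp_carrier)
  have "h1 (gp_class V E n w) = h2 (gp_class V E n w)" using w(1)
  proof (induction w)
    case Nil
    then show ?case using hom_one[OF h1 gp_group H] hom_one[OF h2 gp_group H] by (simp add: gp_one)
  next
    case (Cons l w)
    obtain u a where l: "l = (u, a)" by (cases l)
    have u: "u \<in> V" "w \<in> gp_words V" using Cons.prems l by auto
    have "gp_class V E n (l # w) = gp_class V E n [(u, a)] \<otimes>\<^bsub>?G\<^esub> gp_class V E n w"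
      using u l by (simp add: gp_mult_class)
    moreover have "gp_class V E n w \<in> carrier ?G" using u by (auto simp: gp_carrier)
    ultimately show ?case
      using Cons.IH[OF u(2)] hom_eq_on_letters[OF h1 h2 H u(1) gens[OF u(1)], of a] u
        hom_mult[OF h1] hom_mult[OF h2] by simp
  qed
  then show ?thesis using w by simp
qed

section \<open>Right-angled Artin groups are torsion-free\<close>

definition torsion_free :: "('g, 'm) monoid_scheme \<Rightarrow> bool" where
  "torsion_free H \<longleftrightarrow> (\<forall>x\<in>carrier H. \<forall>k::nat. 0 < k \<longrightarrow> x [^]\<^bsub>H\<^esub> k = \<one>\<^bsub>H\<^esub> \<longrightarrow> x = \<one>\<^bsub>H\<^esub>)"

lemma (in group) conj_nat_pow:
  assumes "x \<in> carrier G" "z \<in> carrier G"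
  shows "(inv z \<otimes> x \<otimes> z) [^] (k::nat) = inv z \<otimes> x [^] k \<otimes> z"
proof (induction k)
  case 0 then show ?case using assms by simp
next
  case (Suc k)
  have cancel: "z \<otimes> (inv z \<otimes> y) = y" if "y \<in> carrier G" for y
    using that assms by (simp add: m_assoc[symmetric])
  show ?case using Suc assms by (simp add: m_assoc cancel)
qed

lemma (in group) conj_eq_one_iff:
  assumes "x \<in> carrier G" "z \<in> carrier G"
  shows "inv z \<otimes> x \<otimes> z = \<one> \<longleftrightarrow> x = \<one>"
  using assms by (metis inv_closed m_closed inv_solve_right l_one inv_inv r_inv inv_solve_left)

text \<open>Normal forms for the HNN splitting  W(V) = W(V - {v}) *_{W(link v)}  along the vertex v.
  A normal form (b, [(e1, r1), ..., (ek, rk)]) stands for  b t^e1 r1 ... t^ek rk, where t is the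
  generator of v, b lies in the base group B = W(V - {v}), the exponents ei are nonzero and the ri
  are coset representatives of W(link v) \ B (their link projection is trivial), nontrivial
  except possibly the last one.  W(V) acts on normal forms from the left.\<close>

type_synonym 'v nf = "'v gword set \<times> (int \<times> 'v gword set) list"

locale raag_extension =
  fixes V :: "'v set" and E :: "'v \<Rightarrow> 'v \<Rightarrow> bool" and n :: "'v \<Rightarrow> nat" and v :: 'v
  assumes v_in_V: "v \<in> V" and all_infinite: "\<forall>u\<in>V. n u = 0"
    and base_torsion_free: "torsion_free (graph_product (V - {v}) E n)"
begin

abbreviation "B \<equiv> graph_product (V - {v}) E n"
abbreviation "G \<equiv> graph_product V E n"

sublocale B: group B by (rule gp_group)
sublocale G: group G by (rule gp_group)

definition link :: "'v set" where
  "link = {w \<in> V - {v}. E v w \<or> E w v}"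

text \<open>The retraction of the base group onto the link subgroup W(link), and the cofactor
  proj(b)^-1 b, which represents the coset W(link) b.\<close>

definition proj :: "'v gword set \<Rightarrow> 'v gword set" where
  "proj = induced_map (V - {v}) E n (filter (\<lambda>l. fst l \<in> link))"

definition cofactor :: "'v gword set \<Rightarrow> 'v gword set" where
  "cofactor b = inv\<^bsub>B\<^esub> (proj b) \<otimes>\<^bsub>B\<^esub> b"

lemma proj_resp: "gp_rel (V - {v}) E n x y \<Longrightarrow>
   gp_rel (V - {v}) E n (filter (\<lambda>l. fst l \<in> link) x) (filter (\<lambda>l. fst l \<in> link) y)"
  by (rule gp_rel_filter) auto

lemma proj_hom: "proj \<in> hom B B"
  unfolding proj_def using induced_map_hom[OF proj_resp filter_append] .

lemma proj_class: "w \<in> gp_words (V - {v}) \<Longrightarrow>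
    proj (gp_class (V - {v}) E n w) = gp_class (V - {v}) E n (filter (\<lambda>l. fst l \<in> link) w)"
  unfolding proj_def by (rule induced_map_class[OF proj_resp])

sublocale proj_h: group_hom B B proj
  by (simp add: group_hom_def group_hom_axioms_def proj_hom B.is_group)

lemma proj_closed[simp]: "b \<in> carrier B \<Longrightarrow> proj b \<in> carrier B"
  using proj_hom by (rule hom_in_carrier)

lemma proj_idem[simp]: "b \<in> carrier B \<Longrightarrow> proj (proj b) = proj b"
proof -
  assume "b \<in> carrier B"
  then obtain w where w: "w \<in> gp_words (V - {v})" "b = gp_class (V - {v}) E n w"
    by (auto simp: gp_carrier)
  have "filter (\<lambda>l. fst l \<in> link) w \<in> gp_words (V - {v})" using w(1) by (auto simp: gp_words_def)
  then show ?thesis using w by (simp add: proj_class)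
qed

lemma link_letter_fixed: "u \<in> link \<Longrightarrow>
    proj (gp_class (V - {v}) E n [(u, a)]) = gp_class (V - {v}) E n [(u, a)]"
  by (subst proj_class) (auto simp: link_def)

lemma cofactor_closed[simp]: "b \<in> carrier B \<Longrightarrow> cofactor b \<in> carrier B"
  by (simp add: cofactor_def)

lemma proj_cofactor[simp]: "b \<in> carrier B \<Longrightarrow> proj (cofactor b) = \<one>\<^bsub>B\<^esub>"
  by (simp add: cofactor_def)

lemma proj_cofactor_decomp: "b \<in> carrier B \<Longrightarrow> proj b \<otimes>\<^bsub>B\<^esub> cofactor b = b"
  by (simp add: cofactor_def B.m_assoc[symmetric])

lemma cofactor_one_iff: "b \<in> carrier B \<Longrightarrow> cofactor b = \<one>\<^bsub>B\<^esub> \<longleftrightarrow> proj b = b"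
  unfolding cofactor_def
  by (metis B.inv_closed B.inv_equality B.l_inv proj_closed B.inv_inv B.inv_solve_left B.one_closed B.r_one)

lemma cofactor_proj: "b \<in> carrier B \<Longrightarrow> cofactor (proj b) = \<one>\<^bsub>B\<^esub>"
  by (simp add: cofactor_one_iff)

lemma cofactor_left: "c \<in> carrier B \<Longrightarrow> proj c = c \<Longrightarrow> b \<in> carrier B \<Longrightarrow>
    cofactor (c \<otimes>\<^bsub>B\<^esub> b) = cofactor b"
  unfolding cofactor_def by (simp add: B.inv_mult_group B.m_assoc[symmetric]) (simp add: B.m_assoc)

text \<open>The stable letter t^e acts on a normal form (b, L): if b is not in the link subgroup it
  splits off as  proj b . t^e . cofactor b; otherwise b commutes with t^e, which is merged
  with the first syllable of L.\<close>

definition t_act :: "int \<Rightarrow> 'v nf \<Rightarrow> 'v nf" where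
  "t_act e nf = (case nf of (b0, L) \<Rightarrow>
     if e = 0 then (b0, L)
     else if cofactor b0 \<noteq> \<one>\<^bsub>B\<^esub> then (proj b0, (e, cofactor b0) # L)
     else (case L of [] \<Rightarrow> (b0, [(e, \<one>\<^bsub>B\<^esub>)])
          | p # L' \<Rightarrow> if e + fst p = 0 then (b0 \<otimes>\<^bsub>B\<^esub> snd p, L') else (b0, (e + fst p, snd p) # L')))"

definition base_act :: "'v gword set \<Rightarrow> 'v nf \<Rightarrow> 'v nf" where
  "base_act b nf = (b \<otimes>\<^bsub>B\<^esub> fst nf, snd nf)"

definition reduced :: "'v nf \<Rightarrow> bool" where
  "reduced nf \<longleftrightarrow> fst nf \<in> carrier B \<and>
     (\<forall>p\<in>set (snd nf). fst p \<noteq> 0 \<and> snd p \<in> carrier B \<and> proj (snd p) = \<one>\<^bsub>B\<^esub>) \<and>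
     (\<forall>p\<in>set (butlast (snd nf)). snd p \<noteq> \<one>\<^bsub>B\<^esub>)"

lemma t_act_0[simp]: "t_act 0 nf = nf"
  by (simp add: t_act_def split: prod.splits)

lemma t_act_split: "e \<noteq> 0 \<Longrightarrow> cofactor b0 \<noteq> \<one>\<^bsub>B\<^esub> \<Longrightarrow>
    t_act e (b0, L) = (proj b0, (e, cofactor b0) # L)"
  by (simp add: t_act_def)

lemma t_act_link_Nil: "e \<noteq> 0 \<Longrightarrow> cofactor b0 = \<one>\<^bsub>B\<^esub> \<Longrightarrow> t_act e (b0, []) = (b0, [(e, \<one>\<^bsub>B\<^esub>)])"
  by (simp add: t_act_def)

lemma t_act_link_Cons: "e \<noteq> 0 \<Longrightarrow> cofactor b0 = \<one>\<^bsub>B\<^esub> \<Longrightarrow> t_act e (b0, (e', r') # L) =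
   (if e + e' = 0 then (b0 \<otimes>\<^bsub>B\<^esub> r', L) else (b0, (e + e', r') # L))"
  by (simp add: t_act_def)

lemma reduced_Cons: "reduced (b0, p # L) \<longleftrightarrow>
    b0 \<in> carrier B \<and> fst p \<noteq> 0 \<and> snd p \<in> carrier B \<and> proj (snd p) = \<one>\<^bsub>B\<^esub>
    \<and> (L \<noteq> [] \<longrightarrow> snd p \<noteq> \<one>\<^bsub>B\<^esub>) \<and> reduced (b0, L)"
  by (cases L) (auto simp: reduced_def)

lemma reduced_Nil: "reduced (b0, []) \<longleftrightarrow> b0 \<in> carrier B"
  by (simp add: reduced_def)

lemma reduced_change_base: "reduced (b0, L) \<Longrightarrow> b1 \<in> carrier B \<Longrightarrow> reduced (b1, L)"
  by (simp add: reduced_def)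

lemma t_act_reduced: "reduced nf \<Longrightarrow> reduced (t_act e nf)"
proof -
  assume red: "reduced nf"
  obtain b0 L where nf: "nf = (b0, L)" by (cases nf)
  have b0: "b0 \<in> carrier B" using red nf by (simp add: reduced_def)
  consider "e = 0" | "e \<noteq> 0" "cofactor b0 \<noteq> \<one>\<^bsub>B\<^esub>" | "e \<noteq> 0" "cofactor b0 = \<one>\<^bsub>B\<^esub>" "L = []"
    | e' r' L' where "e \<noteq> 0" "cofactor b0 = \<one>\<^bsub>B\<^esub>" "L = (e', r') # L'"
    by (metis list.exhaust surj_pair)
  then show ?thesis
  proof cases
    case 1 then show ?thesis using red by simp
  next
    case 2 then show ?thesis using red nf b0
      by (auto simp: t_act_split reduced_Cons intro: reduced_change_base)
  next
    case 3 then show ?thesis using nf b0 by (simp add: t_act_link_Nil reduced_Cons reduced_Nil)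
  next
    case 4 then show ?thesis using red nf b0
      by (auto simp: t_act_link_Cons reduced_Cons intro: reduced_change_base)
  qed
qed

lemma t_act_add_split:
  assumes b0: "b0 \<in> carrier B" and cof: "cofactor b0 \<noteq> \<one>\<^bsub>B\<^esub>" and ab: "a \<noteq> 0" "b \<noteq> 0"
  shows "t_act a (t_act b (b0, L)) = t_act (a + b) (b0, L)"
proof -
  have "cofactor (proj b0) = \<one>\<^bsub>B\<^esub>" using b0 by (rule cofactor_proj)
  moreover have "proj b0 \<otimes>\<^bsub>B\<^esub> cofactor b0 = b0" using b0 by (rule proj_cofactor_decomp)
  ultimately show ?thesis using ab cof by (simp add: t_act_split t_act_link_Cons add.assoc)
qed

lemma t_act_add_link:
  assumes red: "reduced (b0, L)" and cof: "cofactor b0 = \<one>\<^bsub>B\<^esub>" and ab: "a \<noteq> 0" "b \<noteq> 0"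
  shows "t_act a (t_act b (b0, L)) = t_act (a + b) (b0, L)"
proof (cases L)
  case Nil
  then show ?thesis using ab cof red by (simp add: t_act_link_Nil t_act_link_Cons reduced_Nil)
next
  case (Cons p L')
  obtain e' r' where p: "p = (e', r')" by (cases p)
  have b0: "b0 \<in> carrier B" and r': "r' \<in> carrier B" "proj r' = \<one>\<^bsub>B\<^esub>" "e' \<noteq> 0"
    and last: "L' \<noteq> [] \<longrightarrow> r' \<noteq> \<one>\<^bsub>B\<^esub>"
    using red Cons p by (auto simp: reduced_Cons)
  show ?thesis
  proof (cases "b + e' = 0")
    case False
    then show ?thesis using ab cof Cons p r'(3)
      by (cases "a + b = 0") (auto simp: t_act_link_Cons add.assoc)
  next
    case cancel: True
    have pb: "proj b0 = b0" using cof b0 cofactor_one_iff by blast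
    have cof_r': "cofactor (b0 \<otimes>\<^bsub>B\<^esub> r') = r'"
      using pb b0 r' unfolding cofactor_def by (simp add: B.m_assoc[symmetric])
    have exps: "a + b + e' = a" "a + b = 0 \<Longrightarrow> e' = a" using cancel by simp_all
    show ?thesis
    proof (cases "r' = \<one>\<^bsub>B\<^esub>")
      case False
      then show ?thesis using ab cof Cons p cancel cof_r' pb b0 r' exps
        by (cases "a + b = 0") (simp_all add: t_act_split t_act_link_Cons)
    next
      case True
      then have "L' = []" using last by auto
      then show ?thesis using ab cof Cons p cancel True b0 exps
        by (cases "a + b = 0") (simp_all add: t_act_link_Nil t_act_link_Cons)
    qed
  qed
qed

lemma t_act_add: "reduced nf \<Longrightarrow> t_act a (t_act b nf) = t_act (a + b) nf"
proof -
  assume red: "reduced nf"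
  obtain b0 L where nf: "nf = (b0, L)" by (cases nf)
  have b0: "b0 \<in> carrier B" using red nf by (simp add: reduced_def)
  show ?thesis
    using t_act_add_split[OF b0, of a b L] t_act_add_link[of b0 L a b] red nf
    by (cases "a = 0 \<or> b = 0") auto
qed

lemma base_act_reduced: "reduced nf \<Longrightarrow> x \<in> carrier B \<Longrightarrow> reduced (base_act x nf)"
  by (simp add: base_act_def reduced_def)

lemma base_act_mult: "reduced nf \<Longrightarrow> x \<in> carrier B \<Longrightarrow> y \<in> carrier B \<Longrightarrow>
    base_act x (base_act y nf) = base_act (x \<otimes>\<^bsub>B\<^esub> y) nf"
  by (simp add: base_act_def reduced_def B.m_assoc)

lemma base_act_one: "reduced nf \<Longrightarrow> base_act \<one>\<^bsub>B\<^esub> nf = nf"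
  by (simp add: base_act_def reduced_def)

lemma t_act_base_act_comm:
  assumes c: "c \<in> carrier B" "proj c = c" and red: "reduced nf"
  shows "t_act a (base_act c nf) = base_act c (t_act a nf)"
proof -
  obtain b0 L where nf: "nf = (b0, L)" by (cases nf)
  have b0: "b0 \<in> carrier B" using red nf by (simp add: reduced_def)
  have cof: "cofactor (c \<otimes>\<^bsub>B\<^esub> b0) = cofactor b0" using c b0 by (rule cofactor_left)
  have pr: "proj (c \<otimes>\<^bsub>B\<^esub> b0) = c \<otimes>\<^bsub>B\<^esub> proj b0" using c b0 by simp
  consider "a = 0" | "a \<noteq> 0" "cofactor b0 \<noteq> \<one>\<^bsub>B\<^esub>" | "a \<noteq> 0" "cofactor b0 = \<one>\<^bsub>B\<^esub>" "L = []"
    | e' r' L' where "a \<noteq> 0" "cofactor b0 = \<one>\<^bsub>B\<^esub>" "L = (e', r') # L'"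
    by (metis list.exhaust surj_pair)
  then show ?thesis
  proof cases
    case 1 then show ?thesis by simp
  next
    case 2 then show ?thesis using nf cof pr by (simp add: base_act_def t_act_split)
  next
    case 3 then show ?thesis using nf cof by (simp add: base_act_def t_act_link_Nil)
  next
    case 4
    then have "r' \<in> carrier B" using red nf by (auto simp: reduced_Cons)
    then show ?thesis using 4 nf cof c b0 by (simp add: base_act_def t_act_link_Cons B.m_assoc)
  qed
qed

definition letter_act :: "'v \<times> int \<Rightarrow> 'v nf \<Rightarrow> 'v nf" where
  "letter_act l = (if fst l = v then t_act (snd l) else base_act (gp_class (V - {v}) E n [l]))"

primrec word_act :: "'v gword \<Rightarrow> 'v nf \<Rightarrow> 'v nf" where
  "word_act [] = id"
| "word_act (l # w) = letter_act l \<circ> word_act w"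

lemma word_act_append: "word_act (x @ y) = word_act x \<circ> word_act y"
  by (induction x) auto

lemma letter_act_reduced: "fst l \<in> V \<Longrightarrow> reduced nf \<Longrightarrow> reduced (letter_act l nf)"
  by (cases l) (auto simp: letter_act_def intro: t_act_reduced base_act_reduced)

lemma word_act_reduced: "w \<in> gp_words V \<Longrightarrow> reduced nf \<Longrightarrow> reduced (word_act w nf)"
  by (induction w) (auto intro: letter_act_reduced)

lemma word_act_ctx:
  assumes "\<And>nf. reduced nf \<Longrightarrow> word_act x nf = word_act y nf" "s \<in> gp_words V" "reduced nf"
  shows "word_act (p @ x @ s) nf = word_act (p @ y @ s) nf"
  using assms word_act_reduced[OF assms(2,3)] by (simp add: word_act_append)

lemma word_act_mult_letters:
  assumes u: "u \<in> V" and red: "reduced nf"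
  shows "word_act [(u, a), (u, b)] nf = word_act [(u, a + b)] nf"
proof (cases "u = v")
  case True then show ?thesis using red by (simp add: letter_act_def t_act_add)
next
  case False
  have "gp_rel (V - {v}) E n ([] @ [(u, a), (u, b)] @ []) ([] @ [(u, a + b)] @ [])"
    by (rule gp_rel.gp_mult) (use u False in auto)
  then have "gp_class (V - {v}) E n [(u, a)] \<otimes>\<^bsub>B\<^esub> gp_class (V - {v}) E n [(u, b)] =
             gp_class (V - {v}) E n [(u, a + b)]"
    using u False by (simp add: gp_mult_class gp_class_eq)
  then show ?thesis using red u False by (simp add: letter_act_def base_act_mult)
qed

text \<open>Here all vertex groups are infinite, so the only trivial letters have exponent zero.\<close>

lemma word_act_zero_letter:
  assumes u: "u \<in> V" and a: "int (n u) dvd a" and red: "reduced nf"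
  shows "word_act [(u, a)] nf = nf"
proof -
  have a0: "a = 0" using u a all_infinite by auto
  show ?thesis
  proof (cases "u = v")
    case True then show ?thesis using a0 by (simp add: letter_act_def)
  next
    case False
    have "gp_class (V - {v}) E n [(u, a)] = \<one>\<^bsub>B\<^esub>"
      by (rule class_letter_zero) (use u False a0 in auto)
    then show ?thesis using red False by (simp add: letter_act_def base_act_one)
  qed
qed

lemma word_act_comm_letters:
  assumes uw: "u \<in> V" "w \<in> V" "E u w" and red: "reduced nf"
  shows "word_act [(u, a), (w, b)] nf = word_act [(w, b), (u, a)] nf"
proof (cases "u = v \<or> w = v")
  case True
  then consider "u = v" "w = v" | "u = v" "w \<in> link" | "w = v" "u \<in> link"
    using uw by (auto simp: link_def)
  then show ?thesis
    by cases (use red uw in \<open>simp_all add: letter_act_def t_act_add add.commute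
                t_act_base_act_comm link_letter_fixed\<close>)
next
  case False
  have "gp_rel (V - {v}) E n ([] @ [(u, a), (w, b)] @ []) ([] @ [(w, b), (u, a)] @ [])"
    by (rule gp_rel.gp_comm) (use uw False in auto)
  then have "gp_class (V - {v}) E n [(u, a)] \<otimes>\<^bsub>B\<^esub> gp_class (V - {v}) E n [(w, b)] =
             gp_class (V - {v}) E n [(w, b)] \<otimes>\<^bsub>B\<^esub> gp_class (V - {v}) E n [(u, a)]"
    using uw False by (simp add: gp_mult_class gp_class_eq)
  then show ?thesis using red False uw by (simp add: letter_act_def base_act_mult)
qed

lemma word_act_resp: "gp_rel V E n x y \<Longrightarrow> reduced nf \<Longrightarrow> word_act x nf = word_act y nf"
proof (induction arbitrary: nf rule: gp_rel.induct)
  case (gp_mult u p s a b)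
  then show ?case using word_act_ctx word_act_mult_letters by blast
next
  case (gp_zero u p s a)
  then show ?case using word_act_ctx[of "[(u, a)]" "[]"] word_act_zero_letter by simp
next
  case (gp_comm u w p s a b)
  then show ?case using word_act_ctx word_act_comm_letters by blast
qed simp_all

definition act :: "'v gword set \<Rightarrow> 'v nf \<Rightarrow> 'v nf" where
  "act X nf = word_act (SOME w. w \<in> X) nf"

lemma act_class: "w \<in> gp_words V \<Longrightarrow> reduced nf \<Longrightarrow> act (gp_class V E n w) nf = word_act w nf"
proof -
  assume w: "w \<in> gp_words V" and red: "reduced nf"
  have "(SOME w'. w' \<in> gp_class V E n w) \<in> gp_class V E n w"
    using gp_class_self[OF w] by (rule someI)
  then have "gp_rel V E n w (SOME w'. w' \<in> gp_class V E n w)" by (simp add: gp_class_def)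
  then show ?thesis using word_act_resp[OF _ red] by (simp add: act_def)
qed

lemma carrier_G_cases: "X \<in> carrier G \<Longrightarrow> (\<And>w. w \<in> gp_words V \<Longrightarrow> X = gp_class V E n w \<Longrightarrow> P) \<Longrightarrow> P"
  by (auto simp: gp_carrier)

lemma act_reduced: "X \<in> carrier G \<Longrightarrow> reduced nf \<Longrightarrow> reduced (act X nf)"
  by (erule carrier_G_cases) (simp add: act_class word_act_reduced)

lemma act_mult: "X \<in> carrier G \<Longrightarrow> Y \<in> carrier G \<Longrightarrow> reduced nf \<Longrightarrow>
    act (X \<otimes>\<^bsub>G\<^esub> Y) nf = act X (act Y nf)"
  by (erule carrier_G_cases, erule carrier_G_cases)
    (simp add: gp_mult_class act_class word_act_append word_act_reduced)

lemma act_one: "reduced nf \<Longrightarrow> act \<one>\<^bsub>G\<^esub> nf = nf"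
  by (simp add: gp_one act_class)

lemma act_pow: "X \<in> carrier G \<Longrightarrow> reduced nf \<Longrightarrow> act (X [^]\<^bsub>G\<^esub> (k::nat)) nf = (act X ^^ k) nf"
proof (induction k)
  case 0 then show ?case by (simp add: act_one)
next
  case (Suc k)
  have "X [^]\<^bsub>G\<^esub> Suc k = X \<otimes>\<^bsub>G\<^esub> X [^]\<^bsub>G\<^esub> k" using Suc.prems(1) by (rule G.nat_pow_Suc2)
  then show ?case using Suc by (simp add: act_mult)
qed

definition base_incl :: "'v gword set \<Rightarrow> 'v gword set" where
  "base_incl = induced_map V E n id"

lemma base_incl_resp: "gp_rel (V - {v}) E n x y \<Longrightarrow> gp_rel V E n (id x) (id y)"
  by (auto intro: gp_rel_mono)

lemma base_incl_hom: "base_incl \<in> hom B G"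
  unfolding base_incl_def using induced_map_hom[OF base_incl_resp] by simp

sublocale incl_h: group_hom B G base_incl
  by (simp add: group_hom_def group_hom_axioms_def base_incl_hom B.is_group G.is_group)

lemma base_incl_class: "w \<in> gp_words (V - {v}) \<Longrightarrow> base_incl (gp_class (V - {v}) E n w) = gp_class V E n w"
  unfolding base_incl_def using induced_map_class[OF base_incl_resp] by simp

lemma word_act_base: "u \<in> gp_words (V - {v}) \<Longrightarrow> reduced nf \<Longrightarrow>
    word_act u nf = base_act (gp_class (V - {v}) E n u) nf"
proof (induction u arbitrary: nf)
  case Nil then show ?case by (simp add: gp_one[symmetric] base_act_one)
next
  case (Cons l u)
  obtain w a where l: "l = (w, a)" by (cases l)
  have wv: "w \<in> V" "w \<noteq> v" "u \<in> gp_words (V - {v})" using Cons.prems l by auto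
  have cu: "gp_class (V - {v}) E n u \<in> carrier B" using wv by (auto simp: gp_carrier)
  have "gp_class (V - {v}) E n (l # u) = gp_class (V - {v}) E n [(w, a)] \<otimes>\<^bsub>B\<^esub> gp_class (V - {v}) E n u"
    using wv l by (simp add: gp_mult_class)
  then show ?case using Cons wv l cu by (simp add: letter_act_def base_act_mult)
qed

lemma act_base_incl: "b \<in> carrier B \<Longrightarrow> reduced nf \<Longrightarrow> act (base_incl b) nf = base_act b nf"
proof -
  assume b: "b \<in> carrier B" and red: "reduced nf"
  then obtain u where u: "u \<in> gp_words (V - {v})" "b = gp_class (V - {v}) E n u"
    by (auto simp: gp_carrier)
  have "u \<in> gp_words V" using u(1) by (rule gp_words_mono) auto
  then show ?thesis using u red by (simp add: base_incl_class act_class word_act_base)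
qed

definition t_pow :: "int \<Rightarrow> 'v gword set" where
  "t_pow e = gp_class V E n [(v, e)]"

lemma t_pow_closed[simp]: "t_pow e \<in> carrier G"
  using v_in_V by (simp add: t_pow_def)

lemma act_t_pow: "reduced nf \<Longrightarrow> act (t_pow e) nf = t_act e nf"
  using v_in_V by (simp add: t_pow_def act_class letter_act_def)

lemma t_pow_add: "t_pow a \<otimes>\<^bsub>G\<^esub> t_pow b = t_pow (a + b)"
proof -
  have "gp_rel V E n ([] @ [(v, a), (v, b)] @ []) ([] @ [(v, a + b)] @ [])"
    by (rule gp_rel.gp_mult) (use v_in_V in auto)
  then show ?thesis using v_in_V by (simp add: t_pow_def gp_mult_class gp_class_eq)
qed

lemma t_pow_add_left: "X \<in> carrier G \<Longrightarrow> t_pow a \<otimes>\<^bsub>G\<^esub> (t_pow b \<otimes>\<^bsub>G\<^esub> X) = t_pow (a + b) \<otimes>\<^bsub>G\<^esub> X"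
  by (simp add: G.m_assoc[symmetric] t_pow_add)

lemma t_pow_0: "t_pow 0 = \<one>\<^bsub>G\<^esub>"
  unfolding t_pow_def by (rule class_letter_zero) (use v_in_V in auto)

lemma link_word_comm: "u \<in> gp_words link \<Longrightarrow> gp_rel V E n (u @ [(v, e)]) ((v, e) # u)"
proof (induction u)
  case Nil then show ?case using v_in_V by (auto intro: gp_rel.gp_refl)
next
  case (Cons l u)
  obtain w a where l: "l = (w, a)" by (cases l)
  have w: "w \<in> link" "u \<in> gp_words link" using Cons.prems l by auto
  have wV: "w \<in> V" "w \<noteq> v" "E v w \<or> E w v" using w by (auto simp: link_def)
  have uV: "u \<in> gp_words V" using w(2) by (auto simp: gp_words_def link_def)
  have shift: "gp_rel V E n ([(w, a)] @ (u @ [(v, e)]) @ []) ([(w, a)] @ ((v, e) # u) @ [])"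
    by (rule gp_rel_app) (use Cons w wV in auto)
  have swap: "gp_rel V E n ([] @ [(w, a), (v, e)] @ u) ([] @ [(v, e), (w, a)] @ u)"
  proof (cases "E w v")
    case True then show ?thesis by (intro gp_rel.gp_comm) (use wV v_in_V uV in auto)
  next
    case False
    then have "E v w" using wV by auto
    then have "gp_rel V E n ([] @ [(v, e), (w, a)] @ u) ([] @ [(w, a), (v, e)] @ u)"
      by (intro gp_rel.gp_comm) (use wV v_in_V uV in auto)
    then show ?thesis by (rule gp_rel.gp_sym)
  qed
  show ?case using gp_rel.gp_trans[OF shift] swap l by simp
qed

lemma link_comm_t_pow: "c \<in> carrier B \<Longrightarrow> proj c = c \<Longrightarrow>
    base_incl c \<otimes>\<^bsub>G\<^esub> t_pow e = t_pow e \<otimes>\<^bsub>G\<^esub> base_incl c"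
proof -
  assume c: "c \<in> carrier B" "proj c = c"
  then obtain w where w: "w \<in> gp_words (V - {v})" "c = gp_class (V - {v}) E n w" by (auto simp: gp_carrier)
  let ?u = "filter (\<lambda>l. fst l \<in> link) w"
  have u: "?u \<in> gp_words (V - {v})" "?u \<in> gp_words link" "?u \<in> gp_words V"
    using w(1) by (auto simp: gp_words_def link_def)
  have "c = gp_class (V - {v}) E n ?u" using c w by (simp add: proj_class)
  then show ?thesis using u v_in_V
    by (simp add: base_incl_class t_pow_def gp_mult_class gp_class_eq link_word_comm)
qed

lemma link_comm_t_pow_left: "c \<in> carrier B \<Longrightarrow> proj c = c \<Longrightarrow> X \<in> carrier G \<Longrightarrow>
    base_incl c \<otimes>\<^bsub>G\<^esub> (t_pow e \<otimes>\<^bsub>G\<^esub> X) = t_pow e \<otimes>\<^bsub>G\<^esub> (base_incl c \<otimes>\<^bsub>G\<^esub> X)"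
  by (simp add: G.m_assoc[symmetric] link_comm_t_pow)

primrec syllables :: "(int \<times> 'v gword set) list \<Rightarrow> 'v gword set" where
  "syllables [] = \<one>\<^bsub>G\<^esub>"
| "syllables (p # L) = t_pow (fst p) \<otimes>\<^bsub>G\<^esub> (base_incl (snd p) \<otimes>\<^bsub>G\<^esub> syllables L)"

lemma syllables_closed[simp]: "\<forall>p\<in>set L. snd p \<in> carrier B \<Longrightarrow> syllables L \<in> carrier G"
  by (induction L) auto

lemma syllables_append: "\<forall>q\<in>set K1. snd q \<in> carrier B \<Longrightarrow> \<forall>q\<in>set K2. snd q \<in> carrier B \<Longrightarrow>
   syllables (K1 @ K2) = syllables K1 \<otimes>\<^bsub>G\<^esub> syllables K2"
  by (induction K1) (auto simp: G.m_assoc)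

lemma syllables_snoc: "\<forall>q\<in>set K. snd q \<in> carrier B \<Longrightarrow> r \<in> carrier B \<Longrightarrow> x \<in> carrier B \<Longrightarrow>
   syllables (K @ [(e, r)]) \<otimes>\<^bsub>G\<^esub> base_incl x = syllables (K @ [(e, r \<otimes>\<^bsub>B\<^esub> x)])"
  by (induction K) (auto simp: G.m_assoc)

definition nf_value :: "'v nf \<Rightarrow> 'v gword set" where
  "nf_value nf = base_incl (fst nf) \<otimes>\<^bsub>G\<^esub> syllables (snd nf)"

lemma nf_value_closed: "reduced nf \<Longrightarrow> nf_value nf \<in> carrier G"
  by (simp add: nf_value_def reduced_def)

lemma nf_value_base_act: "reduced nf \<Longrightarrow> b \<in> carrier B \<Longrightarrow>
    nf_value (base_act b nf) = base_incl b \<otimes>\<^bsub>G\<^esub> nf_value nf"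
  by (simp add: nf_value_def base_act_def reduced_def G.m_assoc)

lemma nf_value_t_act: "reduced nf \<Longrightarrow> nf_value (t_act e nf) = t_pow e \<otimes>\<^bsub>G\<^esub> nf_value nf"
proof -
  assume red: "reduced nf"
  obtain b0 L where nf: "nf = (b0, L)" by (cases nf)
  have b0: "b0 \<in> carrier B" and L: "syllables L \<in> carrier G" using red nf by (auto simp: reduced_def)
  consider "e = 0" | "e \<noteq> 0" "cofactor b0 \<noteq> \<one>\<^bsub>B\<^esub>" | "e \<noteq> 0" "cofactor b0 = \<one>\<^bsub>B\<^esub>" "L = []"
    | e' r' L' where "e \<noteq> 0" "cofactor b0 = \<one>\<^bsub>B\<^esub>" "L = (e', r') # L'"
    by (metis list.exhaust surj_pair)
  then show ?thesis
  proof cases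
    case 1 then show ?thesis using red by (simp add: t_pow_0 nf_value_closed)
  next
    case 2
    have "base_incl b0 = base_incl (proj b0) \<otimes>\<^bsub>G\<^esub> base_incl (cofactor b0)"
      using b0 proj_cofactor_decomp[OF b0] by (metis incl_h.hom_mult proj_closed cofactor_closed)
    then show ?thesis using 2 nf b0 L
      by (simp add: t_act_split nf_value_def G.m_assoc link_comm_t_pow_left)
  next
    case 3
    then have "proj b0 = b0" using b0 cofactor_one_iff by blast
    then show ?thesis using 3 nf b0 by (simp add: t_act_link_Nil nf_value_def link_comm_t_pow)
  next
    case 4
    have pb: "proj b0 = b0" using 4 b0 cofactor_one_iff by blast
    have "r' \<in> carrier B" "syllables L' \<in> carrier G" using red nf 4 by (auto simp: reduced_def)
    then show ?thesis using 4 nf b0 pb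
      by (cases "e + e' = 0")
        (simp_all add: t_act_link_Cons nf_value_def link_comm_t_pow_left t_pow_add_left t_pow_0 G.m_assoc)
  qed
qed

lemma nf_value_word_act: "w \<in> gp_words V \<Longrightarrow> reduced nf \<Longrightarrow>
    nf_value (word_act w nf) = gp_class V E n w \<otimes>\<^bsub>G\<^esub> nf_value nf"
proof (induction w arbitrary: nf)
  case Nil then show ?case by (simp add: gp_one[symmetric] nf_value_closed)
next
  case (Cons l w)
  obtain u a where l: "l = (u, a)" by (cases l)
  have uw: "u \<in> V" "w \<in> gp_words V" using Cons.prems l by auto
  have red_w: "reduced (word_act w nf)" using uw Cons.prems word_act_reduced by blast
  have split: "gp_class V E n (l # w) = gp_class V E n [(u, a)] \<otimes>\<^bsub>G\<^esub> gp_class V E n w"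
    using uw l by (simp add: gp_mult_class)
  have "gp_class V E n w \<in> carrier G" using uw by (auto simp: gp_carrier)
  moreover have "u \<noteq> v \<Longrightarrow> base_incl (gp_class (V - {v}) E n [(u, a)]) = gp_class V E n [(u, a)]"
    using uw by (simp add: base_incl_class)
  ultimately show ?case using Cons red_w l split uw nf_value_closed[OF Cons.prems(2)]
    by (cases "u = v")
      (simp_all add: letter_act_def nf_value_t_act nf_value_base_act t_pow_def G.m_assoc)
qed

definition nf_one :: "'v nf" where
  "nf_one = (\<one>\<^bsub>B\<^esub>, [])"

lemma reduced_nf_one[simp]: "reduced nf_one"
  by (simp add: nf_one_def reduced_def)

lemma nf_value_nf_one: "nf_value nf_one = \<one>\<^bsub>G\<^esub>"
  by (simp add: nf_one_def nf_value_def)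

lemma nf_value_act: "X \<in> carrier G \<Longrightarrow> nf_value (act X nf_one) = X"
proof -
  assume "X \<in> carrier G"
  then obtain w where w: "w \<in> gp_words V" "X = gp_class V E n w" by (auto simp: gp_carrier)
  then have "X \<in> carrier G" by (simp add: gp_carrier)
  then show ?thesis using w by (simp add: act_class nf_value_word_act nf_value_nf_one)
qed

lemma act_torsion: "X \<in> carrier G \<Longrightarrow> X [^]\<^bsub>G\<^esub> (k::nat) = \<one>\<^bsub>G\<^esub> \<Longrightarrow> (act X ^^ k) nf_one = nf_one"
  by (simp add: act_pow[symmetric] act_one)

lemma t_act_length: "length (snd (t_act e nf)) \<le> Suc (length (snd nf))"
  by (cases nf; cases "snd nf") (auto simp: t_act_def split: if_splits)

lemma act_syllables_Cons:
  assumes "reduced nf" "snd p \<in> carrier B" "\<forall>q\<in>set K. snd q \<in> carrier B"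
  shows "act (syllables (p # K)) nf = t_act (fst p) (base_act (snd p) (act (syllables K) nf))"
proof -
  have red: "reduced (act (syllables K) nf)" using assms by (simp add: act_reduced)
  have "act (syllables (p # K)) nf = act (t_pow (fst p)) (act (base_incl (snd p)) (act (syllables K) nf))"
    using assms red by (simp add: act_mult act_reduced)
  also have "\<dots> = t_act (fst p) (base_act (snd p) (act (syllables K) nf))"
    using assms red by (simp add: act_base_incl act_t_pow base_act_reduced)
  finally show ?thesis .
qed

lemma act_syllables_length:
  "reduced nf \<Longrightarrow> \<forall>q\<in>set K. snd q \<in> carrier B \<Longrightarrow>
   length (snd (act (syllables K) nf)) \<le> length (snd nf) + length K"
proof (induction K)
  case Nil then show ?case by (simp add: act_one)
next
  case (Cons p K)
  have "act (syllables (p # K)) nf = t_act (fst p) (base_act (snd p) (act (syllables K) nf))"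
    by (rule act_syllables_Cons) (use Cons.prems in auto)
  then show ?case using Cons t_act_length[of "fst p" "base_act (snd p) (act (syllables K) nf)"]
    by (simp add: base_act_def)
qed

lemma act_syllables_outside_link:
  assumes "\<forall>q\<in>set K. fst q \<noteq> 0 \<and> snd q \<in> carrier B \<and> proj (snd q) \<noteq> snd q"
    and "reduced (c, M)" "proj c = c"
  shows "\<exists>c' M'. act (syllables K) (c, M) = (c', M') \<and> reduced (c', M') \<and> proj c' = c' \<and>
           length M' = length M + length K"
  using assms
proof (induction K)
  case Nil then show ?case by (simp add: act_one)
next
  case (Cons p K)
  obtain e \<sigma> where p: "p = (e, \<sigma>)" by (cases p)
  have \<sigma>: "e \<noteq> 0" "\<sigma> \<in> carrier B" "proj \<sigma> \<noteq> \<sigma>" using Cons.prems p by auto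
  obtain c1 M1 where c1: "act (syllables K) (c, M) = (c1, M1)" "reduced (c1, M1)" "proj c1 = c1"
    "length M1 = length M + length K" using Cons by auto
  have c1_B: "c1 \<in> carrier B" using c1 by (simp add: reduced_def)
  have "proj (\<sigma> \<otimes>\<^bsub>B\<^esub> c1) \<noteq> \<sigma> \<otimes>\<^bsub>B\<^esub> c1"
    using \<sigma> c1 c1_B by (simp add: B.right_cancel)
  then have cof: "cofactor (\<sigma> \<otimes>\<^bsub>B\<^esub> c1) \<noteq> \<one>\<^bsub>B\<^esub>" using \<sigma> c1_B by (simp add: cofactor_one_iff)
  have "act (syllables (p # K)) (c, M) = t_act e (base_act \<sigma> (c1, M1))"
    using act_syllables_Cons[of "(c, M)" p K] Cons.prems p c1 by simp
  also have "\<dots> = (proj (\<sigma> \<otimes>\<^bsub>B\<^esub> c1), (e, cofactor (\<sigma> \<otimes>\<^bsub>B\<^esub> c1)) # M1)"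
    using cof \<sigma> by (simp add: base_act_def t_act_split)
  finally have eq: "act (syllables (p # K)) (c, M) = (proj (\<sigma> \<otimes>\<^bsub>B\<^esub> c1), (e, cofactor (\<sigma> \<otimes>\<^bsub>B\<^esub> c1)) # M1)" .
  moreover have "reduced (t_act e (base_act \<sigma> (c1, M1)))"
    using c1 \<sigma> by (simp add: t_act_reduced base_act_reduced)
  ultimately show ?case using \<open>t_act e (base_act \<sigma> (c1, M1)) = _\<close> c1 c1_B \<sigma> by simp
qed

text \<open>Torsion of the three kinds of elements met in the induction.  First, torsion in the base
  group is excluded by hypothesis.\<close>

lemma base_incl_torsion:
  assumes b: "b \<in> carrier B" and k: "0 < (k::nat)" and tor: "base_incl b [^]\<^bsub>G\<^esub> k = \<one>\<^bsub>G\<^esub>"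
  shows "b = \<one>\<^bsub>B\<^esub>"
proof -
  have "base_act (b [^]\<^bsub>B\<^esub> k) nf_one = act (base_incl (b [^]\<^bsub>B\<^esub> k)) nf_one"
    using b by (simp add: act_base_incl)
  also have "\<dots> = nf_one" using tor b by (simp add: incl_h.hom_nat_pow act_one)
  finally have "b [^]\<^bsub>B\<^esub> k = \<one>\<^bsub>B\<^esub>" using b by (simp add: base_act_def nf_one_def)
  then show ?thesis using base_torsion_free b k by (auto simp: torsion_free_def)
qed

text \<open>Second, a product of syllables outside the link subgroup: its powers have ever longer
  normal forms.\<close>

lemma outside_link_no_torsion:
  assumes K: "K \<noteq> []" "\<forall>q\<in>set K. fst q \<noteq> 0 \<and> snd q \<in> carrier B \<and> proj (snd q) \<noteq> snd q"
    and k: "0 < (k::nat)"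
  shows "syllables K [^]\<^bsub>G\<^esub> k \<noteq> \<one>\<^bsub>G\<^esub>"
proof
  assume "syllables K [^]\<^bsub>G\<^esub> k = \<one>\<^bsub>G\<^esub>"
  then have triv: "(act (syllables K) ^^ k) nf_one = nf_one" using K(2) by (simp add: act_torsion)
  have iter: "\<exists>c M. (act (syllables K) ^^ j) nf_one = (c, M) \<and> reduced (c, M) \<and> proj c = c \<and>
          length M = j * length K" for j
  proof (induction j)
    case 0 then show ?case by (simp add: nf_one_def reduced_def)
  next
    case (Suc j)
    then obtain c M where "(act (syllables K) ^^ j) nf_one = (c, M)" "reduced (c, M)" "proj c = c"
      "length M = j * length K" by auto
    then show ?case using act_syllables_outside_link[OF K(2), of c M] by auto
  qed
  obtain c M where "(act (syllables K) ^^ k) nf_one = (c, M)" "length M = k * length K"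
    using iter by blast
  then show False using triv K(1) k by (simp add: nf_one_def)
qed

text \<open>Third, a single syllable t^e c with c in the link subgroup: its powers are t^(je) c^j.\<close>

lemma link_syllable_no_torsion:
  assumes s: "s \<in> carrier B" "proj s = s" and e: "e \<noteq> 0" and k: "0 < (k::nat)"
  shows "syllables [(e, s)] [^]\<^bsub>G\<^esub> k \<noteq> \<one>\<^bsub>G\<^esub>"
proof
  assume "syllables [(e, s)] [^]\<^bsub>G\<^esub> k = \<one>\<^bsub>G\<^esub>"
  then have triv: "(act (syllables [(e, s)]) ^^ k) nf_one = nf_one" using s by (simp add: act_torsion)
  have step: "act (syllables [(e, s)]) nf = t_act e (base_act s nf)" if "reduced nf" for nf
    using act_syllables_Cons[of nf "(e, s)" "[]"] that s by (simp add: act_one)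
  have cof_s: "cofactor s = \<one>\<^bsub>B\<^esub>" using s by (simp add: cofactor_one_iff)
  have iter: "\<exists>c. (act (syllables [(e, s)]) ^^ Suc j) nf_one = (c, [(int (Suc j) * e, \<one>\<^bsub>B\<^esub>)]) \<and>
          c \<in> carrier B \<and> proj c = c" for j
  proof (induction j)
    case 0
    have "(act (syllables [(e, s)]) ^^ Suc 0) nf_one = (s, [(e, \<one>\<^bsub>B\<^esub>)])"
      using step[OF reduced_nf_one] s cof_s e by (simp add: nf_one_def base_act_def t_act_link_Nil)
    then show ?case using s by simp
  next
    case (Suc j)
    then obtain c where c: "(act (syllables [(e, s)]) ^^ Suc j) nf_one = (c, [(int (Suc j) * e, \<one>\<^bsub>B\<^esub>)])"
      "c \<in> carrier B" "proj c = c" by auto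
    have red: "reduced (c, [(int (Suc j) * e, \<one>\<^bsub>B\<^esub>)])" using c e by (simp add: reduced_def)
    have psc: "proj (s \<otimes>\<^bsub>B\<^esub> c) = s \<otimes>\<^bsub>B\<^esub> c" using s c by simp
    then have "cofactor (s \<otimes>\<^bsub>B\<^esub> c) = \<one>\<^bsub>B\<^esub>" using c s by (simp add: cofactor_one_iff)
    moreover have "e + int (Suc j) * e = int (Suc (Suc j)) * e" by (simp add: algebra_simps)
    moreover have "int (Suc (Suc j)) * e \<noteq> 0" using e by simp
    ultimately have "(act (syllables [(e, s)]) ^^ Suc (Suc j)) nf_one = (s \<otimes>\<^bsub>B\<^esub> c, [(int (Suc (Suc j)) * e, \<one>\<^bsub>B\<^esub>)])"
      using step[OF red] c e by (simp add: base_act_def t_act_link_Cons del: of_nat_Suc)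
    then show ?case using psc c s by auto
  qed
  obtain j where j: "k = Suc j" using k by (cases k) auto
  then obtain c where "(act (syllables [(e, s)]) ^^ k) nf_one = (c, [(int k * e, \<one>\<^bsub>B\<^esub>)])"
    using iter[of j] by blast
  then have "(c, [(int k * e, \<one>\<^bsub>B\<^esub>)]) = nf_one" using triv by metis
  then show False by (simp add: nf_one_def)
qed

text \<open>Conjugating  b0 t^e1 r1 ... t^em rm  by b0 moves b0 into the last syllable; conjugating
  t^e1 r1 ... t^em s with s in the link subgroup by t^em moves t^em to the front, shortening
  the normal form.\<close>

lemma conj_into_last_syllable:
  assumes b0: "b0 \<in> carrier B" and rm: "rm \<in> carrier B" and L1: "\<forall>q\<in>set L1. snd q \<in> carrier B"
  shows "inv\<^bsub>G\<^esub> (base_incl b0) \<otimes>\<^bsub>G\<^esub> (base_incl b0 \<otimes>\<^bsub>G\<^esub> syllables (L1 @ [(em, rm)])) \<otimes>\<^bsub>G\<^esub> base_incl b0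
         = syllables (L1 @ [(em, rm \<otimes>\<^bsub>B\<^esub> b0)])"
proof -
  have "syllables (L1 @ [(em, rm)]) \<in> carrier G" using L1 rm by simp
  then have "inv\<^bsub>G\<^esub> (base_incl b0) \<otimes>\<^bsub>G\<^esub> (base_incl b0 \<otimes>\<^bsub>G\<^esub> syllables (L1 @ [(em, rm)])) \<otimes>\<^bsub>G\<^esub> base_incl b0
         = syllables (L1 @ [(em, rm)]) \<otimes>\<^bsub>G\<^esub> base_incl b0"
    using b0 by (simp add: G.m_assoc[symmetric])
  also have "\<dots> = syllables (L1 @ [(em, rm \<otimes>\<^bsub>B\<^esub> b0)])" using syllables_snoc[OF L1 rm b0] .
  finally show ?thesis .
qed

lemma conj_rotate_syllables:
  assumes s: "s \<in> carrier B" "proj s = s" and r1: "r1 \<in> carrier B" and M: "\<forall>q\<in>set M. snd q \<in> carrier B"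
  shows "inv\<^bsub>G\<^esub> (inv\<^bsub>G\<^esub> t_pow em) \<otimes>\<^bsub>G\<^esub> syllables ((e1, r1) # M @ [(em, s)]) \<otimes>\<^bsub>G\<^esub> inv\<^bsub>G\<^esub> t_pow em
         = syllables ((em + e1, r1) # M) \<otimes>\<^bsub>G\<^esub> base_incl s"
proof -
  have "syllables [(em, s)] = base_incl s \<otimes>\<^bsub>G\<^esub> t_pow em"
    using link_comm_t_pow[OF s, of em] s by simp
  then have "syllables ((e1, r1) # M @ [(em, s)]) =
      t_pow e1 \<otimes>\<^bsub>G\<^esub> (base_incl r1 \<otimes>\<^bsub>G\<^esub> (syllables M \<otimes>\<^bsub>G\<^esub> (base_incl s \<otimes>\<^bsub>G\<^esub> t_pow em)))"
    using M s by (simp add: syllables_append)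
  then show ?thesis using M r1 s by (simp add: G.m_assoc t_pow_add_left)
qed

lemma rotated_length:
  assumes s: "s \<in> carrier B" and r1: "r1 \<in> carrier B" and M: "\<forall>q\<in>set M. snd q \<in> carrier B"
  shows "length (snd (act (syllables ((e, r1) # M) \<otimes>\<^bsub>G\<^esub> base_incl s) nf_one)) \<le> Suc (length M)"
proof -
  have "act (syllables ((e, r1) # M) \<otimes>\<^bsub>G\<^esub> base_incl s) nf_one
      = act (syllables ((e, r1) # M)) (act (base_incl s) nf_one)"
    by (rule act_mult) (use assms in auto)
  also have "act (base_incl s) nf_one = (s, [])"
    using act_base_incl[OF s reduced_nf_one] s by (simp add: base_act_def nf_one_def)
  finally have "act (syllables ((e, r1) # M) \<otimes>\<^bsub>G\<^esub> base_incl s) nf_one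
      = act (syllables ((e, r1) # M)) (s, [])" .
  then show ?thesis
    using act_syllables_length[of "(s, [])" "(e, r1) # M"] assms by (simp add: reduced_def)
qed

lemma torsion_syllables_shorten:
  assumes L1: "\<forall>q\<in>set L1. fst q \<noteq> 0 \<and> snd q \<in> carrier B \<and> proj (snd q) = \<one>\<^bsub>B\<^esub> \<and> snd q \<noteq> \<one>\<^bsub>B\<^esub>"
    and em: "em \<noteq> 0" and s: "s \<in> carrier B" and k: "0 < (k::nat)"
    and tor: "syllables (L1 @ [(em, s)]) [^]\<^bsub>G\<^esub> k = \<one>\<^bsub>G\<^esub>"
    and nontriv: "syllables (L1 @ [(em, s)]) \<noteq> \<one>\<^bsub>G\<^esub>"
  shows "\<exists>Y \<in> carrier G. Y [^]\<^bsub>G\<^esub> k = \<one>\<^bsub>G\<^esub> \<and> Y \<noteq> \<one>\<^bsub>G\<^esub> \<and> length (snd (act Y nf_one)) \<le> length L1"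
proof (cases "proj s = s")
  case False
  have "\<forall>q\<in>set (L1 @ [(em, s)]). fst q \<noteq> 0 \<and> snd q \<in> carrier B \<and> proj (snd q) \<noteq> snd q"
    using L1 em s False by force
  then show ?thesis using outside_link_no_torsion[of "L1 @ [(em, s)]"] k tor by simp
next
  case link: True
  show ?thesis
  proof (cases L1)
    case Nil
    then show ?thesis using link_syllable_no_torsion[OF s link em k] tor by simp
  next
    case (Cons p M)
    obtain e1 r1 where p: "p = (e1, r1)" by (cases p)
    have r1: "r1 \<in> carrier B" and M: "\<forall>q\<in>set M. snd q \<in> carrier B" using L1 Cons p by auto
    let ?X = "syllables (L1 @ [(em, s)])" and ?Z = "inv\<^bsub>G\<^esub> t_pow em"
    let ?Y = "syllables ((em + e1, r1) # M) \<otimes>\<^bsub>G\<^esub> base_incl s"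
    have X: "?X \<in> carrier G" using L1 s by simp
    have Y: "?Y = inv\<^bsub>G\<^esub> ?Z \<otimes>\<^bsub>G\<^esub> ?X \<otimes>\<^bsub>G\<^esub> ?Z"
      using conj_rotate_syllables[OF s link r1 M] Cons p by simp
    have "?Y [^]\<^bsub>G\<^esub> k = \<one>\<^bsub>G\<^esub>" using Y G.conj_nat_pow[OF X, of ?Z k] tor by simp
    moreover have "?Y \<noteq> \<one>\<^bsub>G\<^esub>" using Y G.conj_eq_one_iff[OF X, of ?Z] nontriv by simp
    moreover have "length (snd (act ?Y nf_one)) \<le> length L1"
      using rotated_length[OF s r1 M, of "em + e1"] Cons by simp
    ultimately show ?thesis using r1 M s by auto
  qed
qed

theorem torsion_free_extension: "torsion_free G"
proof -
  have "X = \<one>\<^bsub>G\<^esub>" if "X \<in> carrier G" "0 < (k::nat)" "X [^]\<^bsub>G\<^esub> k = \<one>\<^bsub>G\<^esub>" for X k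
    using that
  proof (induction "length (snd (act X nf_one))" arbitrary: X rule: less_induct)
    case less
    obtain b0 L where nf: "act X nf_one = (b0, L)" by (cases "act X nf_one")
    have red: "reduced (b0, L)" using act_reduced[OF less.prems(1) reduced_nf_one] nf by simp
    then have b0: "b0 \<in> carrier B" by (simp add: reduced_def)
    have X: "X = base_incl b0 \<otimes>\<^bsub>G\<^esub> syllables L"
      using nf_value_act[OF less.prems(1)] nf by (simp add: nf_value_def)
    show ?case
    proof (cases L rule: rev_cases)
      case Nil
      then show ?thesis using X b0 base_incl_torsion[OF b0 less.prems(2)] less.prems(3) by simp
    next
      case (snoc L1 q)
      obtain em rm where q: "q = (em, rm)" by (cases q)
      have L1: "\<forall>q\<in>set L1. fst q \<noteq> 0 \<and> snd q \<in> carrier B \<and> proj (snd q) = \<one>\<^bsub>B\<^esub> \<and> snd q \<noteq> \<one>\<^bsub>B\<^esub>"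
        and rm: "rm \<in> carrier B" "em \<noteq> 0" using red snoc q by (auto simp: reduced_def)
      let ?b = "base_incl b0" and ?Y = "syllables (L1 @ [(em, rm \<otimes>\<^bsub>B\<^esub> b0)])"
      have Y: "?Y = inv\<^bsub>G\<^esub> ?b \<otimes>\<^bsub>G\<^esub> X \<otimes>\<^bsub>G\<^esub> ?b"
        using conj_into_last_syllable[OF b0 rm(1), of L1 em] L1 X snoc q by simp
      have b: "?b \<in> carrier G" using b0 by simp
      show ?thesis
      proof (rule ccontr)
        assume "X \<noteq> \<one>\<^bsub>G\<^esub>"
        then have "?Y \<noteq> \<one>\<^bsub>G\<^esub>" using Y G.conj_eq_one_iff[OF less.prems(1) b] by simp
        moreover have "?Y [^]\<^bsub>G\<^esub> k = \<one>\<^bsub>G\<^esub>" using Y G.conj_nat_pow[OF less.prems(1) b] less.prems(3) b by simp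
        ultimately obtain Z where Z: "Z \<in> carrier G" "Z [^]\<^bsub>G\<^esub> k = \<one>\<^bsub>G\<^esub>" "Z \<noteq> \<one>\<^bsub>G\<^esub>"
          and shorter: "length (snd (act Z nf_one)) \<le> length L1"
          using torsion_syllables_shorten[OF L1 rm(2) _ less.prems(2)] rm b0 by blast
        have "length (snd (act Z nf_one)) < length (snd (act X nf_one))" using shorter nf snoc by simp
        then show False using less.hyps[OF _ Z(1) less.prems(2) Z(2)] Z(3) by blast
      qed
    qed
  qed
  then show ?thesis unfolding torsion_free_def by blast
qed

end

lemma raag_torsion_free: "finite V \<Longrightarrow> \<forall>u\<in>V. n u = 0 \<Longrightarrow> torsion_free (graph_product V E n)"
proof (induction V rule: finite_induct)
  case empty
  have "gp_words ({} :: 'a set) = {[]}" by (auto simp: gp_words_def)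
  then show ?case by (auto simp: torsion_free_def gp_carrier gp_one)
next
  case (insert v F)
  have F: "insert v F - {v} = F" using insert by auto
  interpret raag_extension "insert v F" E n v
    by unfold_locales (use insert F in auto)
  show ?case by (rule torsion_free_extension)
qed

section \<open>The retraction onto the infinite-order vertices and Lemma 5.1\<close>

lemma retr_A_induced_map: "retr_A V E n = induced_map (inf_vertices V n) E n (filter (\<lambda>l. n (fst l) = 0))"
  by (rule ext) (simp add: retr_A_def induced_map_def)

lemma retr_hom: "retr_A V E n \<in> hom (graph_product V E n) (graph_product (inf_vertices V n) E n)"
  unfolding retr_A_induced_map
  by (rule induced_map_hom) (auto intro: gp_rel_filter simp: inf_vertices_def)

lemma retr_class: "w \<in> gp_words V \<Longrightarrow>
    retr_A V E n (gp_class V E n w) = gp_class (inf_vertices V n) E n (filter (\<lambda>l. n (fst l) = 0) w)"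
  unfolding retr_A_induced_map
  by (rule induced_map_class) (auto intro: gp_rel_filter simp: inf_vertices_def)

lemma retr_gen_inf: "u \<in> V \<Longrightarrow> n u = 0 \<Longrightarrow> retr_A V E n (gp_gen V E n u) = gp_gen (inf_vertices V n) E n u"
  by (simp add: gp_gen_def retr_class)

lemma retr_gen_fin: "u \<in> V \<Longrightarrow> n u \<noteq> 0 \<Longrightarrow>
    retr_A V E n (gp_gen V E n u) = \<one>\<^bsub>graph_product (inf_vertices V n) E n\<^esub>"
  by (simp add: gp_gen_def retr_class gp_one)

lemma inf_vertices_subset: "inf_vertices V n \<subseteq> V"
  by (auto simp: inf_vertices_def)

lemma incl_hom: "induced_map V E n id \<in> hom (graph_product (inf_vertices V n) E n) (graph_product V E n)"
  by (rule induced_map_hom) (auto intro: gp_rel_mono[OF _ inf_vertices_subset])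

lemma incl_class: "w \<in> gp_words (inf_vertices V n) \<Longrightarrow>
    induced_map V E n id (gp_class (inf_vertices V n) E n w) = gp_class V E n w"
proof -
  assume w: "w \<in> gp_words (inf_vertices V n)"
  have "induced_map V E n id (gp_class (inf_vertices V n) E n w) = gp_class V E n (id w)"
    by (rule induced_map_class[of "inf_vertices V n" E n V id])
      (use w gp_rel_mono[OF _ inf_vertices_subset] in auto)
  then show ?thesis by simp
qed

lemma incl_gen: "u \<in> inf_vertices V n \<Longrightarrow>
    induced_map V E n id (gp_gen (inf_vertices V n) E n u) = gp_gen V E n u"
  by (simp add: gp_gen_def incl_class)

lemma retr_incl: "x \<in> carrier (graph_product (inf_vertices V n) E n) \<Longrightarrow>
    retr_A V E n (induced_map V E n id x) = x"
proof -
  assume "x \<in> carrier (graph_product (inf_vertices V n) E n)"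
  then obtain w where w: "w \<in> gp_words (inf_vertices V n)" "x = gp_class (inf_vertices V n) E n w"
    by (auto simp: gp_carrier)
  have "w \<in> gp_words V" using w(1) inf_vertices_subset by (rule gp_words_mono)
  moreover have "filter (\<lambda>l. n (fst l) = 0) w = w" using w(1)
    by (auto simp: gp_words_def inf_vertices_def intro!: filter_True)
  ultimately show ?thesis using w by (simp add: incl_class retr_class)
qed

text \<open>The key fact: for a homomorphism chi : W(Sigma) -> W(Gamma), the composite rho_A o chi kills
  every finite-order generator (its image is torsion in a torsion-free group), hence factors
  through rho_A : W(Sigma) -> W(Sigma_A).\<close>

lemma retr_comp_factors:
  assumes fin: "finite VG"
    and chi: "\<chi> \<in> hom (graph_product VS ES nS) (graph_product VG EG nG)"
    and x: "x \<in> carrier (graph_product VS ES nS)"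
  shows "retr_A VG EG nG (\<chi> (induced_map VS ES nS id (retr_A VS ES nS x))) = retr_A VG EG nG (\<chi> x)"
proof -
  let ?WS = "graph_product VS ES nS" and ?WSA = "graph_product (inf_vertices VS nS) ES nS"
  let ?WGA = "graph_product (inf_vertices VG nG) EG nG"
  let ?f = "retr_A VG EG nG \<circ> \<chi>"
  have gWS: "group ?WS" and gWSA: "group ?WSA" and gWGA: "group ?WGA" by (rule gp_group)+
  have f: "?f \<in> hom ?WS ?WGA" by (rule hom_compose[OF chi retr_hom])
  have f_incl: "?f \<circ> induced_map VS ES nS id \<in> hom ?WSA ?WGA" by (rule hom_compose[OF incl_hom f])
  have tf: "torsion_free ?WGA"
    by (rule raag_torsion_free) (use fin in \<open>auto simp: inf_vertices_def\<close>)
  have "(?f \<circ> induced_map VS ES nS id \<circ> retr_A VS ES nS) x = ?f x"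
  proof (rule hom_eq_on_generators[OF hom_compose[OF retr_hom f_incl] f gWGA _ x])
    fix u assume u: "u \<in> VS"
    show "(?f \<circ> induced_map VS ES nS id \<circ> retr_A VS ES nS) (gp_gen VS ES nS u) = ?f (gp_gen VS ES nS u)"
    proof (cases "nS u = 0")
      case True
      then have "u \<in> inf_vertices VS nS" using u by (simp add: inf_vertices_def)
      then show ?thesis using u True by (simp add: retr_gen_inf incl_gen)
    next
      case False
      have gen: "gp_gen VS ES nS u \<in> carrier ?WS" using u by (simp add: gp_gen_def)
      have "?f (gp_gen VS ES nS u) [^]\<^bsub>?WGA\<^esub> nS u = ?f (gp_gen VS ES nS u [^]\<^bsub>?WS\<^esub> nS u)"
        using hom_nat_pow[OF f gen gWS gWGA] by simp
      also have "\<dots> = \<one>\<^bsub>?WGA\<^esub>" using gen_pow_order[OF u] hom_one[OF f gWS gWGA] by simp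
      finally have "?f (gp_gen VS ES nS u) = \<one>\<^bsub>?WGA\<^esub>"
        using tf hom_in_carrier[OF f gen] False unfolding torsion_free_def by blast
      then show ?thesis
        using retr_gen_fin[of u VS nS ES, OF u False] hom_one[OF f_incl gWSA gWGA] by (simp add: comp_assoc)
    qed
  qed
  then show ?thesis by simp
qed

definition A_part :: "'a set \<Rightarrow> ('a \<Rightarrow> 'a \<Rightarrow> bool) \<Rightarrow> ('a \<Rightarrow> nat) \<Rightarrow>
    'b set \<Rightarrow> ('b \<Rightarrow> 'b \<Rightarrow> bool) \<Rightarrow> ('b \<Rightarrow> nat) \<Rightarrow> ('a gword set \<Rightarrow> 'b gword set) \<Rightarrow>
    'a gword set \<Rightarrow> 'b gword set" where
  "A_part VG EG nG VS ES nS f = retr_A VS ES nS \<circ> f \<circ> induced_map VG EG nG id"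

lemma A_part_hom:
  assumes "f \<in> hom (graph_product VG EG nG) (graph_product VS ES nS)"
  shows "A_part VG EG nG VS ES nS f \<in>
    hom (graph_product (inf_vertices VG nG) EG nG) (graph_product (inf_vertices VS nS) ES nS)"
  unfolding A_part_def by (rule hom_compose[OF incl_hom hom_compose[OF assms retr_hom]])

lemma A_part_gen: "v \<in> inf_vertices VG nG \<Longrightarrow>
    A_part VG EG nG VS ES nS f (gp_gen (inf_vertices VG nG) EG nG v) = retr_A VS ES nS (f (gp_gen VG EG nG v))"
  by (simp add: A_part_def incl_gen)

lemma A_part_left_inverse:
  assumes fin: "finite VG"
    and phi: "\<phi> \<in> hom (graph_product VG EG nG) (graph_product VS ES nS)"
    and chi: "\<chi> \<in> hom (graph_product VS ES nS) (graph_product VG EG nG)"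
    and inverse: "\<And>x. x \<in> carrier (graph_product VG EG nG) \<Longrightarrow> \<chi> (\<phi> x) = x"
    and z: "z \<in> carrier (graph_product (inf_vertices VG nG) EG nG)"
  shows "A_part VS ES nS VG EG nG \<chi> (A_part VG EG nG VS ES nS \<phi> z) = z"
proof -
  have iz: "induced_map VG EG nG id z \<in> carrier (graph_product VG EG nG)"
    using incl_hom z by (rule hom_in_carrier)
  have "\<phi> (induced_map VG EG nG id z) \<in> carrier (graph_product VS ES nS)"
    using phi iz by (rule hom_in_carrier)
  from retr_comp_factors[OF fin chi this] show ?thesis
    using inverse[OF iz] retr_incl[OF z] by (simp add: A_part_def)
qed

theorem lemma5p1:
  fixes VG :: "'a set" and EG :: "'a \<Rightarrow> 'a \<Rightarrow> bool" and nG :: "'a \<Rightarrow> nat"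
    and VS :: "'b set" and ES :: "'b \<Rightarrow> 'b \<Rightarrow> bool" and nS :: "'b \<Rightarrow> nat"
    and \<phi> :: "'a gword set \<Rightarrow> 'b gword set"
  assumes "labeled_cyclic_graph VG EG nG"
    and "labeled_cyclic_graph VS ES nS"
    and "\<phi> \<in> iso (graph_product VG EG nG) (graph_product VS ES nS)"
  shows "\<exists>\<psi>. \<psi> \<in> iso (graph_product (inf_vertices VG nG) EG nG)
                   (graph_product (inf_vertices VS nS) ES nS) \<and>
             (\<forall>v \<in> inf_vertices VG nG.
                \<psi> (gp_gen (inf_vertices VG nG) EG nG v) = retr_A VS ES nS (\<phi> (gp_gen VG EG nG v)))"
proof -
  let ?WG = "graph_product VG EG nG" and ?WS = "graph_product VS ES nS"
  have fin: "finite VG" "finite VS" using assms(1,2) by (auto simp: labeled_cyclic_graph_def)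
  obtain \<chi> where "group_isomorphisms ?WG ?WS \<phi> \<chi>"
    using group.iso_iff_group_isomorphisms[OF gp_group] assms(3) by blast
  then have phi: "\<phi> \<in> hom ?WG ?WS" and chi: "\<chi> \<in> hom ?WS ?WG"
    and inverses: "\<And>x. x \<in> carrier ?WG \<Longrightarrow> \<chi> (\<phi> x) = x" "\<And>y. y \<in> carrier ?WS \<Longrightarrow> \<phi> (\<chi> y) = y"
    by (auto simp: group_isomorphisms_def)
  let ?\<psi> = "A_part VG EG nG VS ES nS \<phi>" and ?\<psi>' = "A_part VS ES nS VG EG nG \<chi>"
  have "group_isomorphisms (graph_product (inf_vertices VG nG) EG nG)
          (graph_product (inf_vertices VS nS) ES nS) ?\<psi> ?\<psi>'"
    unfolding group_isomorphisms_def
  proof (intro conjI ballI A_part_hom[OF phi] A_part_hom[OF chi])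
    show "?\<psi>' (?\<psi> z) = z" if "z \<in> carrier (graph_product (inf_vertices VG nG) EG nG)" for z
      by (rule A_part_left_inverse[OF fin(1) phi chi inverses(1) that])
    show "?\<psi> (?\<psi>' y) = y" if "y \<in> carrier (graph_product (inf_vertices VS nS) ES nS)" for y
      by (rule A_part_left_inverse[OF fin(2) chi phi inverses(2) that])
  qed
  then have "?\<psi> \<in> iso (graph_product (inf_vertices VG nG) EG nG) (graph_product (inf_vertices VS nS) ES nS)"
    by (rule group_isomorphisms_imp_iso)
  then show ?thesis by (intro exI[of _ ?\<psi>]) (simp add: A_part_gen)
qed

end
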